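(* Let $\gamma>0$, $0<q<1$, and for $\lambda\ge0$ define $f_\lambda(x;\mu)=d(x;\mu)-I(\mu)-\lambda(x^2-\gamma)$ and $g_\lambda(x;\mu)=q\,f_\lambda(0;\mu)+(1-q)f_\lambda(x;\mu)$. Then $\mu_0\in\Lambda(\gamma,q)$ maximizes $I(\mu)$ over $\Lambda(\gamma,q)$ if and only if there exists $\lambda\ge0$ such that $g_\lambda(x;\mu_0)\le0$ for every $x\in\mathbb{R}$. Furthermore, for a maximizer $\mu_0$ and such a $\lambda$, $g_\lambda(x;\mu_0)=0$ for every $x\in S_{\mu_0}\setminus\{0\}$.
   Context: $\phi(t)=\frac{1}{\sqrt{2\pi}}e^{-t^2/2}$; $p_Y(y;\mu)=\mathbb{E}_\mu[\phi(y-X)]$; $d(x;\mu)=\int\phi(y-x)\log\frac{\phi(y-x)}{p_Y(y;\mu)}dy$; $I(\mu)=\int d(x;\mu)\mu(dx)$. $\Lambda(\gamma,q)=\{\mu:\mu(\{0\})\ge q,\ \mathbb{E}_\mu[X^2]\le\gamma\}$. $S_\mu$ is the set of points of increase of $\mu$, i.e. the points $x\in\mathbb{R}$ such that $\mu(O)>0$ for every open set $O\ni x$. *)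

theory Defs
  imports "HOL-Probability.Probability"
begin

definition phi :: "real \<Rightarrow> real" where
  "phi t = exp (- (t^2) / 2) / sqrt (2 * pi)"

definition pY :: "real measure \<Rightarrow> real \<Rightarrow> real" where
  "pY \<mu> y = (\<integral>x. phi (y - x) \<partial>\<mu>)"

definition dens_d :: "real \<Rightarrow> real measure \<Rightarrow> real" where
  "dens_d x \<mu> = (\<integral>y. phi (y - x) * ln (phi (y - x) / pY \<mu> y) \<partial>lborel)"

definition info :: "real measure \<Rightarrow> real" where
  "info \<mu> = (\<integral>x. dens_d x \<mu> \<partial>\<mu>)"

definition Lambda :: "real \<Rightarrow> real \<Rightarrow> real measure set" where
  "Lambda \<gamma> q = {\<mu>. prob_space \<mu> \<and> sets \<mu> = sets borel \<and>
      measure \<mu> {0} \<ge> q \<and> (\<integral>\<^sup>+x. ennreal (x^2) \<partial>\<mu>) \<le> ennreal \<gamma>}"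

definition f_lam :: "real \<Rightarrow> real \<Rightarrow> real \<Rightarrow> real measure \<Rightarrow> real" where
  "f_lam \<gamma> lam x \<mu> = dens_d x \<mu> - info \<mu> - lam * (x^2 - \<gamma>)"

definition g_lam :: "real \<Rightarrow> real \<Rightarrow> real \<Rightarrow> real \<Rightarrow> real measure \<Rightarrow> real" where
  "g_lam \<gamma> q lam x \<mu> = q * f_lam \<gamma> lam 0 \<mu> + (1 - q) * f_lam \<gamma> lam x \<mu>"

definition points_of_increase :: "real measure \<Rightarrow> real set" where
  "points_of_increase \<mu> = {x. \<forall>U. open U \<and> x \<in> U \<longrightarrow> emeasure \<mu> U > 0}"

end

theory Submission
  imports Defs
begin

(*
  1. The atom at 0 gives p_Y >= q phi > 0, so the "surprisal" -ln p_Y(y) lies between 0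
     and a quadratic in y.  Hence d(x;rho) = K + D(rho,x), where K = int phi ln phi and
     the kernel cross-entropy D(rho,x) = int phi(y-x) (-ln p_Y(y;rho)) dy is nonnegative,
     continuous, and at most quadratic in x.
  2. By Tonelli, int D(rho,x) mu(dx) is the cross-entropy J(mu,rho) of the output densities,
     so I(mu) = K + J(mu,mu), and Gibbs' inequality J(mu,mu) <= J(mu,rho) gives
     I(mu) <= int d(x;rho) mu(dx).
  3. Sufficiency: g <= 0 forces int f(x;mu0) mu(dx) <= 0 for every admissible mu.
  4. Necessity: moving a maximiser mu0 towards mu along mixtures and using Fatou's lemma gives
     int d(x;mu0) mu(dx) <= I(mu0); for three-point measures this is a convexity condition
     from which a Lagrange multiplier lam >= 0 is extracted.
  5. Support: D is continuous, so g < 0 at a point of increase x /= 0 would force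
     int f(x;mu0) mu0(dx) < 0, whereas this integral equals -lam (E X^2 - gamma) >= 0.
*)


section \<open>The Gaussian kernel\<close>

lemma phi_eq_normal_density: "phi (y - x) = normal_density x 1 y"
  by (simp add: phi_def normal_density_def)

lemma phi_pos: "phi t > 0"
  by (simp add: phi_def)

lemma phi_le_peak: "phi t \<le> 1 / sqrt (2*pi)"
  unfolding phi_def by (simp add: divide_right_mono)

text \<open>The peak value of the Gaussian density is below 1, so output densities have
  nonnegative surprisal.\<close>
lemma peak_lt_one: "1 / sqrt (2*pi) < (1::real)"
proof -
  have "2*pi > 1" using pi_gt3 by simp
  then show ?thesis by simp
qed

lemma ln_phi: "ln (phi t) = - ln (sqrt (2*pi)) - t^2/2"
  unfolding phi_def by (simp add: ln_div)

lemma phi_measurable[measurable]: "phi \<in> borel_measurable borel"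
  unfolding phi_def[abs_def] by measurable

lemma continuous_phi: "isCont phi t"
  unfolding phi_def[abs_def] by (intro continuous_intros) auto

lemma phi_integral: "has_bochner_integral lborel (\<lambda>y. phi (y - x)) 1"
proof -
  have "has_bochner_integral lborel (normal_density x 1) 1"
    using integral_normal_density[of 1 x] integrable_normal_density[of 1 x]
    by (metis has_bochner_integral_integrable zero_less_one)
  then show ?thesis by (simp add: phi_eq_normal_density)
qed

lemma phi_centered_moment2: "has_bochner_integral lborel (\<lambda>y. phi (y - x) * (y - x)^2) 1"
proof -
  have "has_bochner_integral lborel (\<lambda>y. normal_density x 1 y * (y - x)^(2*1))
          (fact (2 * 1) / ((2 / 1\<^sup>2)^1 * fact 1))"
    by (rule normal_moment_even) simp
  then show ?thesis by (simp add: phi_eq_normal_density)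
qed

lemma phi_moment2: "has_bochner_integral lborel (\<lambda>y. phi (y - x) * y^2) (1 + x^2)"
proof -
  have "has_bochner_integral lborel
          (\<lambda>y. phi (y - x) * (y - x)^2 + 2*x*(phi (y - x) * y) - x^2 * phi (y - x)) (1 + 2*x*x - x^2 * 1)"
    using normal_moment_nz_1[of 1 x]
    by (intro has_bochner_integral_add has_bochner_integral_diff has_bochner_integral_mult_right
          phi_integral phi_centered_moment2) (simp_all add: phi_eq_normal_density)
  moreover have "(\<lambda>y. phi (y - x) * (y - x)^2 + 2*x*(phi (y - x) * y) - x^2 * phi (y - x))
                   = (\<lambda>y. phi (y - x) * y^2)"
    by (auto simp: fun_eq_iff power2_eq_square algebra_simps)
  ultimately show ?thesis by (simp add: power2_eq_square add.commute)
qed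

text \<open>The negative differential entropy of the standard Gaussian, int phi ln phi.\<close>
definition gauss_log_const :: real where
  "gauss_log_const = - ln (sqrt (2*pi)) - 1/2"

lemma phi_log_phi_integral:
  "has_bochner_integral lborel (\<lambda>y. phi (y - x) * ln (phi (y - x))) gauss_log_const"
proof -
  have "has_bochner_integral lborel
          (\<lambda>y. (- ln (sqrt (2*pi))) * phi (y - x) - (1/2) * (phi (y - x) * (y - x)^2))
          ((- ln (sqrt (2*pi))) * 1 - (1/2) * 1)"
    by (intro has_bochner_integral_diff has_bochner_integral_mult_right phi_integral phi_centered_moment2)
  moreover have "(\<lambda>y. (- ln (sqrt (2*pi))) * phi (y - x) - (1/2) * (phi (y - x) * (y - x)^2))
                   = (\<lambda>y. phi (y - x) * ln (phi (y - x)))"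
    by (auto simp: fun_eq_iff ln_phi algebra_simps)
  ultimately show ?thesis by (simp add: gauss_log_const_def)
qed

lemma phi_nn_integral: "(\<integral>\<^sup>+y. ennreal (phi (y - x)) \<partial>lborel) = 1"
  using phi_integral[of x] phi_pos
  by (subst nn_integral_eq_integral)
     (auto simp: less_imp_le has_bochner_integral_integral_eq intro: integrable.intros)

text \<open>A locally uniform Gaussian majorant of the shifted kernel, used for dominated
  convergence when the shift varies.\<close>
lemma phi_shift_majorant:
  assumes "\<bar>x\<bar> \<le> R"
  shows "phi (y - x) \<le> exp (R^2/2) * (sqrt 2 * normal_density 0 (sqrt 2) y)"
proof -
  have wide: "sqrt 2 * normal_density 0 (sqrt 2) y = exp (- (y^2) / 4) / sqrt (2*pi)"
  proof -
    have "sqrt (2 * pi * (sqrt 2)\<^sup>2) = sqrt (2*pi) * sqrt 2" by (simp add: real_sqrt_mult)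
    then show ?thesis unfolding normal_density_def by simp
  qed
  have "x^2 \<le> R^2" using assms power_mono[of "\<bar>x\<bar>" R 2] by simp
  moreover have "2 * (y - x)^2 + 2 * x^2 - y^2 = (y - 2*x)^2"
    by (simp add: power2_eq_square algebra_simps)
  ultimately have "-((y - x)^2) / 2 \<le> R^2/2 + (- (y^2) / 4)"
    using zero_le_power2[of "y - 2*x"] by linarith
  then have "exp (-((y - x)^2) / 2) \<le> exp (R^2/2) * exp (- (y^2) / 4)"
    by (simp flip: exp_add)
  then have "exp (-((y - x)^2) / 2) / sqrt (2*pi) \<le> exp (R^2/2) * exp (- (y^2) / 4) / sqrt (2*pi)"
    by (rule divide_right_mono) simp
  then show ?thesis unfolding wide phi_def by simp
qed


section \<open>Output densities of input distributions with an atom at the origin\<close>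

definition anchored :: "real \<Rightarrow> real measure \<Rightarrow> bool" where
  "anchored q \<rho> \<longleftrightarrow> prob_space \<rho> \<and> sets \<rho> = sets borel \<and> measure \<rho> {0} \<ge> q"

lemma pY_integrand_integrable:
  assumes "prob_space \<rho>" "sets \<rho> = sets borel"
  shows "integrable \<rho> (\<lambda>x. phi (y - x))"
proof -
  interpret prob_space \<rho> by fact
  show ?thesis
  proof (rule integrable_const_bound[where B="1/sqrt(2*pi)"])
    show "AE x in \<rho>. norm (phi (y - x)) \<le> 1 / sqrt (2 * pi)"
      using phi_le_peak phi_pos by (simp add: less_imp_le)
    show "(\<lambda>x. phi (y - x)) \<in> borel_measurable \<rho>"
      using assms(2) by (simp cong: measurable_cong_sets)
  qed
qed

lemma pY_le_peak:
  assumes "prob_space \<rho>" "sets \<rho> = sets borel"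
  shows "pY \<rho> y \<le> 1/sqrt(2*pi)"
proof -
  interpret prob_space \<rho> by fact
  have "pY \<rho> y \<le> (\<integral>x. 1/sqrt(2*pi) \<partial>\<rho>)"
    unfolding pY_def using pY_integrand_integrable[OF assms] phi_le_peak
    by (intro integral_mono) auto
  then show ?thesis by (simp add: prob_space)
qed

lemma pY_ge_atom:
  assumes "prob_space \<rho>" "sets \<rho> = sets borel"
  shows "pY \<rho> y \<ge> measure \<rho> {0} * phi y"
proof -
  interpret prob_space \<rho> by fact
  have m0: "{0} \<in> sets \<rho>" using assms(2) by simp
  have atom_int: "integrable \<rho> (\<lambda>x. indicator {0} x * phi y)"
    using m0 by (intro integrable_mult_left) (auto simp: integrable_indicator_iff less_top[symmetric])
  have "measure \<rho> {0} * phi y = (\<integral>x. indicator {0} x * phi y \<partial>\<rho>)"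
    using m0 by simp
  also have "\<dots> \<le> pY \<rho> y"
    unfolding pY_def using pY_integrand_integrable[OF assms] phi_pos m0 atom_int
    by (intro integral_mono) (auto simp: indicator_def less_imp_le)
  finally show ?thesis .
qed

lemma pY_pos:
  assumes "anchored q \<rho>" "q > 0"
  shows "pY \<rho> y > 0"
proof -
  have "pY \<rho> y \<ge> measure \<rho> {0} * phi y" using assms pY_ge_atom unfolding anchored_def by blast
  moreover have "measure \<rho> {0} * phi y > 0" using assms phi_pos unfolding anchored_def by auto
  ultimately show ?thesis by linarith
qed

lemma pY_nn_integral:
  assumes "prob_space \<rho>" "sets \<rho> = sets borel"
  shows "ennreal (pY \<rho> y) = (\<integral>\<^sup>+x. phi (y - x) \<partial>\<rho>)"
  unfolding pY_def using pY_integrand_integrable[OF assms] phi_pos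
  by (subst nn_integral_eq_integral) (auto simp: less_imp_le)

lemma pY_measurable:
  assumes "prob_space \<rho>" "sets \<rho> = sets borel"
  shows "pY \<rho> \<in> borel_measurable borel"
proof -
  interpret prob_space \<rho> by fact
  have "(\<lambda>(y,x). phi (y - x)) \<in> borel_measurable (lborel \<Otimes>\<^sub>M \<rho>)"
    by (subst measurable_cong_sets[OF sets_pair_measure_cong[OF sets_lborel assms(2)] refl]) measurable
  then have "(\<lambda>y. \<integral>x. phi (y - x) \<partial>\<rho>) \<in> borel_measurable lborel"
    by (rule borel_measurable_lebesgue_integral)
  then show ?thesis unfolding pY_def[abs_def] by simp
qed

lemma pY_total_mass:
  assumes "prob_space \<mu>" "sets \<mu> = sets borel"
  shows "(\<integral>\<^sup>+y. ennreal (pY \<mu> y) \<partial>lborel) = 1"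
proof -
  interpret prob_space \<mu> by fact
  interpret pair_sigma_finite \<mu> lborel ..
  have m: "(\<lambda>(x,y). ennreal (phi (y - x))) \<in> borel_measurable (\<mu> \<Otimes>\<^sub>M lborel)"
    by (subst measurable_cong_sets[OF sets_pair_measure_cong[OF assms(2) sets_lborel] refl]) measurable
  have "(\<integral>\<^sup>+y. ennreal (pY \<mu> y) \<partial>lborel) = (\<integral>\<^sup>+y. \<integral>\<^sup>+x. ennreal (phi (y - x)) \<partial>\<mu> \<partial>lborel)"
    using pY_nn_integral[OF assms] by simp
  also have "\<dots> = (\<integral>\<^sup>+x. \<integral>\<^sup>+y. ennreal (phi (y - x)) \<partial>lborel \<partial>\<mu>)"
    by (rule Fubini'[OF m])
  also have "\<dots> = 1" by (simp add: phi_nn_integral emeasure_space_1)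
  finally show ?thesis .
qed


definition surprisal :: "real measure \<Rightarrow> real \<Rightarrow> real" where
  "surprisal \<rho> y = - ln (pY \<rho> y)"

definition surprisal_const :: "real \<Rightarrow> real" where
  "surprisal_const q = - ln q + ln (sqrt (2*pi))"

lemma surprisal_measurable[measurable]:
  assumes "prob_space \<rho>" "sets \<rho> = sets borel"
  shows "surprisal \<rho> \<in> borel_measurable borel"
  unfolding surprisal_def[abs_def] using pY_measurable[OF assms] by measurable

lemma surprisal_nonneg:
  assumes "anchored q \<rho>" "q > 0"
  shows "surprisal \<rho> y \<ge> 0"
proof -
  have "pY \<rho> y \<le> 1" using pY_le_peak peak_lt_one assms unfolding anchored_def
    by (meson less_imp_le order_trans)
  then show ?thesis using pY_pos[OF assms] unfolding surprisal_def by simp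
qed

lemma surprisal_le:
  assumes "anchored q \<rho>" "q > 0"
  shows "surprisal \<rho> y \<le> surprisal_const q + y^2/2"
proof -
  have "pY \<rho> y \<ge> q * phi y"
    using pY_ge_atom[of \<rho> y] assms phi_pos unfolding anchored_def
    by (meson less_imp_le mult_right_mono order_trans)
  then have "ln (q * phi y) \<le> ln (pY \<rho> y)"
    using assms phi_pos pY_pos[OF assms] by (subst ln_le_cancel_iff) auto
  moreover have "ln (q * phi y) = ln q + ln (phi y)" using assms phi_pos[of y] by (simp add: ln_mult)
  ultimately show ?thesis using ln_phi[of y] unfolding surprisal_def surprisal_const_def by linarith
qed


section \<open>The kernel cross-entropy D(rho, x)\<close>

definition kernel_xent :: "real measure \<Rightarrow> real \<Rightarrow> real" where
  "kernel_xent \<rho> x = (\<integral>y. phi (y - x) * surprisal \<rho> y \<partial>lborel)"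

lemma kernel_xent_majorant_integral:
  "has_bochner_integral lborel (\<lambda>y. surprisal_const q * phi (y - x) + (1/2) * (phi (y - x) * y^2))
     (surprisal_const q + (1 + x^2)/2)"
proof -
  have "has_bochner_integral lborel (\<lambda>y. surprisal_const q * phi (y - x) + (1/2) * (phi (y - x) * y^2))
     (surprisal_const q * 1 + (1/2) * (1 + x^2))"
    by (intro has_bochner_integral_add has_bochner_integral_mult_right phi_integral phi_moment2)
  then show ?thesis by simp
qed

lemma kernel_xent_integrand_bounds:
  assumes "anchored q \<rho>" "q > 0"
  shows "0 \<le> phi (y - x) * surprisal \<rho> y"
    and "phi (y - x) * surprisal \<rho> y \<le> surprisal_const q * phi (y - x) + (1/2) * (phi (y - x) * y^2)"
proof -
  show "0 \<le> phi (y - x) * surprisal \<rho> y"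
    using surprisal_nonneg[OF assms] phi_pos by (simp add: less_imp_le)
  have "phi (y - x) * surprisal \<rho> y \<le> phi (y - x) * (surprisal_const q + y^2/2)"
    using surprisal_le[OF assms, of y] phi_pos[of "y-x"] by (intro mult_left_mono) auto
  then show "phi (y - x) * surprisal \<rho> y \<le> surprisal_const q * phi (y - x) + (1/2) * (phi (y - x) * y^2)"
    by (simp add: algebra_simps)
qed

lemma kernel_xent_integrable:
  assumes "anchored q \<rho>" "q > 0"
  shows "integrable lborel (\<lambda>y. phi (y - x) * surprisal \<rho> y)"
proof (rule Bochner_Integration.integrable_bound)
  show "integrable lborel (\<lambda>y. surprisal_const q * phi (y - x) + (1/2) * (phi (y - x) * y^2))"
    using kernel_xent_majorant_integral by (rule integrable.intros)
  have "prob_space \<rho>" "sets \<rho> = sets borel" using assms unfolding anchored_def by auto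
  note [measurable] = surprisal_measurable[OF this]
  show "(\<lambda>y. phi (y - x) * surprisal \<rho> y) \<in> borel_measurable lborel" by measurable
  show "AE y in lborel. norm (phi (y - x) * surprisal \<rho> y)
          \<le> norm (surprisal_const q * phi (y - x) + (1/2) * (phi (y - x) * y^2))"
    using kernel_xent_integrand_bounds[OF assms] by (intro AE_I2) (smt (verit) real_norm_def)
qed

lemma kernel_xent_nonneg:
  assumes "anchored q \<rho>" "q > 0"
  shows "kernel_xent \<rho> x \<ge> 0"
  unfolding kernel_xent_def using kernel_xent_integrand_bounds(1)[OF assms]
  by (intro integral_nonneg_AE AE_I2) simp

lemma kernel_xent_le:
  assumes "anchored q \<rho>" "q > 0"
  shows "kernel_xent \<rho> x \<le> surprisal_const q + (1 + x^2)/2"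
proof -
  have "kernel_xent \<rho> x \<le> (\<integral>y. surprisal_const q * phi (y - x) + (1/2) * (phi (y - x) * y^2) \<partial>lborel)"
    unfolding kernel_xent_def
    using kernel_xent_integrable[OF assms] kernel_xent_majorant_integral kernel_xent_integrand_bounds(2)[OF assms]
    by (intro integral_mono) (auto intro: integrable.intros)
  also have "\<dots> = surprisal_const q + (1 + x^2)/2"
    using kernel_xent_majorant_integral by (simp add: has_bochner_integral_integral_eq)
  finally show ?thesis .
qed

lemma dens_d_split:
  assumes "anchored q \<rho>" "q > 0"
  shows "dens_d x \<rho> = gauss_log_const + kernel_xent \<rho> x"
proof -
  have "dens_d x \<rho> = (\<integral>y. phi (y - x) * ln (phi (y - x)) + phi (y - x) * surprisal \<rho> y \<partial>lborel)"
    unfolding dens_d_def surprisal_def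
    using pY_pos[OF assms, THEN less_imp_neq, symmetric] phi_pos[THEN less_imp_neq, symmetric]
    by (intro Bochner_Integration.integral_cong refl) (simp add: ln_div algebra_simps)
  also have "\<dots> = gauss_log_const + kernel_xent \<rho> x"
    unfolding kernel_xent_def using phi_log_phi_integral[of x] kernel_xent_integrable[OF assms, of x]
    by (subst Bochner_Integration.integral_add)
       (auto simp: has_bochner_integral_integral_eq intro: integrable.intros)
  finally show ?thesis .
qed

lemma kernel_xent_nn_integral:
  assumes "anchored q \<rho>" "q > 0"
  shows "ennreal (kernel_xent \<rho> x) = (\<integral>\<^sup>+y. ennreal (phi (y - x) * surprisal \<rho> y) \<partial>lborel)"
  unfolding kernel_xent_def using kernel_xent_integrable[OF assms] kernel_xent_integrand_bounds(1)[OF assms]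
  by (subst nn_integral_eq_integral) auto

lemma kernel_xent_measurable:
  assumes "anchored q \<rho>" "q > 0"
  shows "kernel_xent \<rho> \<in> borel_measurable borel"
proof -
  have "prob_space \<rho>" "sets \<rho> = sets borel" using assms unfolding anchored_def by auto
  note [measurable] = surprisal_measurable[OF this]
  have "(\<lambda>(x,y). ennreal (phi (y - x) * surprisal \<rho> y)) \<in> borel_measurable (borel \<Otimes>\<^sub>M lborel)"
    by (subst measurable_cong_sets[OF sets_pair_measure_cong[OF refl sets_lborel] refl]) measurable
  then have "(\<lambda>x. enn2real (\<integral>\<^sup>+y. ennreal (phi (y - x) * surprisal \<rho> y) \<partial>lborel)) \<in> borel_measurable borel"
    using lborel.borel_measurable_nn_integral by measurable
  moreover have "(\<lambda>x. enn2real (\<integral>\<^sup>+y. ennreal (phi (y - x) * surprisal \<rho> y) \<partial>lborel)) = kernel_xent \<rho>"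
    using kernel_xent_nn_integral[OF assms, symmetric] kernel_xent_nonneg[OF assms] by auto
  ultimately show ?thesis by simp
qed

text \<open>Continuity of D in x, by dominated convergence with the Gaussian majorant.\<close>
lemma kernel_xent_continuous:
  assumes "anchored q \<rho>" "q > 0"
  shows "isCont (kernel_xent \<rho>) x"
proof (rule continuous_at_sequentiallyI)
  fix u assume u: "u \<longlonglongrightarrow> x"
  then obtain R where R: "\<And>n. \<bar>u n\<bar> \<le> R"
    using convergent_imp_Bseq[OF convergentI[OF u]] by (auto simp: Bseq_def)
  have "prob_space \<rho>" "sets \<rho> = sets borel" using assms unfolding anchored_def by auto
  note [measurable] = surprisal_measurable[OF this]
  define w where "w y = exp (R^2/2) * sqrt 2 * (\<bar>surprisal_const q\<bar> * normal_density 0 (sqrt 2) y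
                          + (1/2) * (normal_density 0 (sqrt 2) y * (y - 0)^2))" for y
  have w_int: "integrable lborel w" unfolding w_def
    by (intro integrable_mult_right Bochner_Integration.integrable_add integrable_normal_moment
        integrable_normal_density) auto
  have dominated: "norm (phi (y - u n) * surprisal \<rho> y) \<le> w y" for n y
  proof -
    have L: "0 \<le> surprisal \<rho> y" "surprisal \<rho> y \<le> \<bar>surprisal_const q\<bar> + y^2/2"
      using surprisal_nonneg[OF assms] surprisal_le[OF assms, of y] by auto
    have p: "0 \<le> phi (y - u n)" "phi (y - u n) \<le> exp (R^2/2) * (sqrt 2 * normal_density 0 (sqrt 2) y)"
      using phi_pos phi_shift_majorant[OF R[of n]] by (auto simp: less_imp_le)
    have "norm (phi (y - u n) * surprisal \<rho> y)
            \<le> (exp (R^2/2) * (sqrt 2 * normal_density 0 (sqrt 2) y)) * (\<bar>surprisal_const q\<bar> + y^2/2)"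
      using L p by (simp add: mult_mono)
    also have "\<dots> = w y" unfolding w_def by (simp add: algebra_simps)
    finally show ?thesis .
  qed
  have pointwise: "(\<lambda>n. phi (y - u n) * surprisal \<rho> y) \<longlonglongrightarrow> phi (y - x) * surprisal \<rho> y" for y
    by (intro tendsto_intros isCont_tendsto_compose[OF continuous_phi] u)
  show "(\<lambda>n. kernel_xent \<rho> (u n)) \<longlonglongrightarrow> kernel_xent \<rho> x"
    unfolding kernel_xent_def
    by (rule integral_dominated_convergence[OF _ _ w_int]) (use dominated pointwise in auto)
qed


section \<open>The output cross-entropy J(mu, rho)\<close>

definition output_xent :: "real measure \<Rightarrow> real measure \<Rightarrow> ennreal" where
  "output_xent \<mu> \<rho> = (\<integral>\<^sup>+y. ennreal (pY \<mu> y * surprisal \<rho> y) \<partial>lborel)"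

lemma nn_integral_kernel_xent:
  assumes "prob_space \<mu>" "sets \<mu> = sets borel" "anchored q \<rho>" "q > 0"
  shows "(\<integral>\<^sup>+x. ennreal (kernel_xent \<rho> x) \<partial>\<mu>) = output_xent \<mu> \<rho>"
proof -
  interpret prob_space \<mu> by fact
  interpret pair_sigma_finite \<mu> lborel ..
  have "prob_space \<rho>" "sets \<rho> = sets borel" using assms unfolding anchored_def by auto
  note [measurable] = surprisal_measurable[OF this]
  have m: "(\<lambda>(x,y). ennreal (phi (y - x) * surprisal \<rho> y)) \<in> borel_measurable (\<mu> \<Otimes>\<^sub>M lborel)"
    by (subst measurable_cong_sets[OF sets_pair_measure_cong[OF assms(2) sets_lborel] refl]) measurable
  have inner: "(\<integral>\<^sup>+x. ennreal (phi (y - x) * surprisal \<rho> y) \<partial>\<mu>) = ennreal (pY \<mu> y * surprisal \<rho> y)" for y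
  proof -
    have "(\<integral>\<^sup>+x. ennreal (phi (y - x) * surprisal \<rho> y) \<partial>\<mu>)
            = (\<integral>\<^sup>+x. ennreal (phi (y - x)) * ennreal (surprisal \<rho> y) \<partial>\<mu>)"
      using surprisal_nonneg[OF assms(3,4)] phi_pos
      by (intro nn_integral_cong) (simp add: ennreal_mult less_imp_le)
    also have "\<dots> = (\<integral>\<^sup>+x. ennreal (phi (y - x)) \<partial>\<mu>) * ennreal (surprisal \<rho> y)"
      by (rule nn_integral_multc) (use assms(2) in \<open>simp cong: measurable_cong_sets\<close>)
    also have "\<dots> = ennreal (pY \<mu> y * surprisal \<rho> y)"
      using pY_nn_integral[OF assms(1,2)] surprisal_nonneg[OF assms(3,4)]
      by (simp add: ennreal_mult pY_def integral_nonneg_AE less_imp_le phi_pos)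
    finally show ?thesis .
  qed
  have "(\<integral>\<^sup>+x. ennreal (kernel_xent \<rho> x) \<partial>\<mu>)
          = (\<integral>\<^sup>+x. \<integral>\<^sup>+y. ennreal (phi (y - x) * surprisal \<rho> y) \<partial>lborel \<partial>\<mu>)"
    using kernel_xent_nn_integral[OF assms(3,4)] by simp
  also have "\<dots> = (\<integral>\<^sup>+y. \<integral>\<^sup>+x. ennreal (phi (y - x) * surprisal \<rho> y) \<partial>\<mu> \<partial>lborel)"
    by (rule Fubini'[OF m, symmetric])
  finally show ?thesis unfolding output_xent_def inner .
qed

text \<open>For inputs with finite second moment, D(rho, .) is integrable since it grows at most
  quadratically, and J(mu, rho) is finite.\<close>
lemma kernel_xent_average:
  assumes "prob_space \<mu>" "sets \<mu> = sets borel" "(\<integral>\<^sup>+x. ennreal (x^2) \<partial>\<mu>) < \<infinity>"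
    "anchored q \<rho>" "q > 0"
  shows "output_xent \<mu> \<rho> < \<infinity>" "integrable \<mu> (kernel_xent \<rho>)"
    "integral\<^sup>L \<mu> (kernel_xent \<rho>) = enn2real (output_xent \<mu> \<rho>)"
proof -
  interpret prob_space \<mu> by fact
  define c where "c = \<bar>surprisal_const q\<bar> + 1/2"
  have Dm: "kernel_xent \<rho> \<in> borel_measurable \<mu>"
    using kernel_xent_measurable[OF assms(4,5)] assms(2) by (simp cong: measurable_cong_sets)
  have "(\<integral>\<^sup>+x. ennreal (kernel_xent \<rho> x) \<partial>\<mu>) \<le> (\<integral>\<^sup>+x. ennreal c + ennreal (1/2) * ennreal (x^2) \<partial>\<mu>)"
  proof (rule nn_integral_mono)
    fix x
    have "kernel_xent \<rho> x \<le> c + (1/2) * x^2"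
      using kernel_xent_le[OF assms(4,5), of x] abs_ge_self[of "surprisal_const q"]
      unfolding c_def by (simp add: field_simps)
    then have "ennreal (kernel_xent \<rho> x) \<le> ennreal (c + (1/2) * x^2)" by (rule ennreal_leI)
    also have "\<dots> = ennreal c + ennreal ((1/2) * x^2)"
      unfolding c_def by (rule ennreal_plus) auto
    also have "ennreal ((1/2) * x^2) = ennreal (1/2) * ennreal (x^2)"
      by (rule ennreal_mult) auto
    finally show "ennreal (kernel_xent \<rho> x) \<le> ennreal c + ennreal (1/2) * ennreal (x^2)" .
  qed
  also have "\<dots> = ennreal c + ennreal (1/2) * (\<integral>\<^sup>+x. ennreal (x^2) \<partial>\<mu>)"
    using assms(2)
    by (subst nn_integral_add) (auto simp: nn_integral_cmult emeasure_space_1 cong: measurable_cong_sets)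
  also have "\<dots> < \<infinity>"
    using assms(3) ennreal_less_top[of "1/2"] ennreal_less_top[of c]
    unfolding infinity_ennreal_def by (simp only: ennreal_add_less_top ennreal_mult_less_top) blast
  finally have fin: "(\<integral>\<^sup>+x. ennreal (kernel_xent \<rho> x) \<partial>\<mu>) < \<infinity>" .
  then show "output_xent \<mu> \<rho> < \<infinity>" using nn_integral_kernel_xent[OF assms(1,2,4,5)] by simp
  show "integrable \<mu> (kernel_xent \<rho>)"
    using Dm kernel_xent_nonneg[OF assms(4,5)] fin by (intro integrableI_nonneg) auto
  show "integral\<^sup>L \<mu> (kernel_xent \<rho>) = enn2real (output_xent \<mu> \<rho>)"
    using Dm kernel_xent_nonneg[OF assms(4,5)] nn_integral_kernel_xent[OF assms(1,2,4,5)]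
    by (subst integral_eq_nn_integral) auto
qed

lemma dens_d_average:
  assumes "prob_space \<mu>" "sets \<mu> = sets borel" "(\<integral>\<^sup>+x. ennreal (x^2) \<partial>\<mu>) < \<infinity>"
    "anchored q \<rho>" "q > 0"
  shows "integrable \<mu> (\<lambda>x. dens_d x \<rho>)"
    "(\<integral>x. dens_d x \<rho> \<partial>\<mu>) = gauss_log_const + enn2real (output_xent \<mu> \<rho>)"
proof -
  interpret prob_space \<mu> by fact
  have eq: "(\<lambda>x. dens_d x \<rho>) = (\<lambda>x. gauss_log_const + kernel_xent \<rho> x)"
    using dens_d_split[OF assms(4,5)] by auto
  show "integrable \<mu> (\<lambda>x. dens_d x \<rho>)" unfolding eq using kernel_xent_average[OF assms] by auto
  show "(\<integral>x. dens_d x \<rho> \<partial>\<mu>) = gauss_log_const + enn2real (output_xent \<mu> \<rho>)"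
    unfolding eq using kernel_xent_average[OF assms]
    by (subst Bochner_Integration.integral_add) (auto simp: prob_space)
qed

text \<open>Pointwise,
  a ln(b/a) <= b - a; integrating and using that both output densities have mass 1 gives
  J(mu,mu) + 1 <= J(mu,rho) + 1.\<close>
lemma gibbs_inequality:
  assumes "anchored q \<mu>" "anchored q \<rho>" "q > 0"
  shows "output_xent \<mu> \<mu> \<le> output_xent \<mu> \<rho>"
proof -
  have mm: "prob_space \<mu>" "sets \<mu> = sets borel" and mr: "prob_space \<rho>" "sets \<rho> = sets borel"
    using assms unfolding anchored_def by auto
  note [measurable] = surprisal_measurable[OF mm] surprisal_measurable[OF mr] pY_measurable[OF mm]
    pY_measurable[OF mr]
  have pointwise: "ennreal (pY \<mu> y * surprisal \<mu> y) + ennreal (pY \<mu> y)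
                     \<le> ennreal (pY \<mu> y * surprisal \<rho> y) + ennreal (pY \<rho> y)" for y
  proof -
    let ?a = "pY \<mu> y" and ?b = "pY \<rho> y"
    have a: "?a > 0" and b: "?b > 0" using pY_pos assms by auto
    have "?a * (ln ?b - ln ?a) = ?a * ln (?b / ?a)" using a b by (simp add: ln_div)
    also have "\<dots> \<le> ?a * (?b / ?a - 1)"
      using a b by (intro mult_left_mono ln_le_minus_one) auto
    also have "\<dots> = ?b - ?a" using a by (simp add: field_simps)
    finally have "?a * surprisal \<mu> y + ?a \<le> ?a * surprisal \<rho> y + ?b"
      unfolding surprisal_def by (simp add: algebra_simps)
    then show ?thesis
      using a b surprisal_nonneg[OF assms(1,3)] surprisal_nonneg[OF assms(2,3)]
      by (simp add: ennreal_leI flip: ennreal_plus)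
  qed
  have "output_xent \<mu> \<mu> + 1 = (\<integral>\<^sup>+y. ennreal (pY \<mu> y * surprisal \<mu> y) + ennreal (pY \<mu> y) \<partial>lborel)"
    unfolding output_xent_def using pY_total_mass[OF mm] by (subst nn_integral_add) auto
  also have "\<dots> \<le> (\<integral>\<^sup>+y. ennreal (pY \<mu> y * surprisal \<rho> y) + ennreal (pY \<rho> y) \<partial>lborel)"
    using pointwise by (intro nn_integral_mono) auto
  also have "\<dots> = output_xent \<mu> \<rho> + 1"
    unfolding output_xent_def using pY_total_mass[OF mr] by (subst nn_integral_add) auto
  finally show ?thesis by (simp add: add.commute ennreal_add_left_cancel_le)
qed


lemma LambdaD:
  assumes "\<mu> \<in> Lambda \<gamma> q" "\<gamma> > 0"
  shows "anchored q \<mu>" "prob_space \<mu>" "sets \<mu> = sets borel" "(\<integral>\<^sup>+x. ennreal (x^2) \<partial>\<mu>) < \<infinity>"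
    "integrable \<mu> (\<lambda>x. x^2)" "(\<integral>x. x^2 \<partial>\<mu>) \<le> \<gamma>"
proof -
  show g: "anchored q \<mu>" "prob_space \<mu>" "sets \<mu> = sets borel"
    using assms unfolding Lambda_def anchored_def by auto
  have le: "(\<integral>\<^sup>+x. ennreal (x^2) \<partial>\<mu>) \<le> ennreal \<gamma>" using assms unfolding Lambda_def by auto
  then show fin: "(\<integral>\<^sup>+x. ennreal (x^2) \<partial>\<mu>) < \<infinity>"
    using ennreal_less_top[of \<gamma>] unfolding infinity_ennreal_def by (meson le_less_trans)
  have m: "(\<lambda>x. x^2) \<in> borel_measurable \<mu>" using g(3) by (simp cong: measurable_cong_sets)
  show "integrable \<mu> (\<lambda>x. x^2)" using m fin by (intro integrableI_nonneg) auto
  have "(\<integral>x. x^2 \<partial>\<mu>) = enn2real (\<integral>\<^sup>+x. ennreal (x^2) \<partial>\<mu>)"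
    using m by (subst integral_eq_nn_integral) auto
  also have "\<dots> \<le> enn2real (ennreal \<gamma>)" using le by (intro enn2real_mono) auto
  finally show "(\<integral>x. x^2 \<partial>\<mu>) \<le> \<gamma>" using assms by simp
qed

lemma LambdaI:
  assumes "prob_space M" "sets M = sets borel" "measure M {0} \<ge> q"
    "(\<integral>\<^sup>+x. ennreal (x^2) \<partial>M) \<le> ennreal \<gamma>"
  shows "M \<in> Lambda \<gamma> q"
  using assms unfolding Lambda_def by auto

lemma info_eq_output_xent:
  assumes "\<mu> \<in> Lambda \<gamma> q" "\<gamma> > 0" "q > 0"
  shows "info \<mu> = gauss_log_const + enn2real (output_xent \<mu> \<mu>)"
  unfolding info_def using dens_d_average[OF LambdaD(2,3,4,1)[OF assms(1,2)] assms(3)] by simp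

lemma info_le_dens_d_average:
  assumes "\<mu> \<in> Lambda \<gamma> q" "\<rho> \<in> Lambda \<gamma> q" "\<gamma> > 0" "q > 0"
  shows "info \<mu> \<le> (\<integral>x. dens_d x \<rho> \<partial>\<mu>)"
proof -
  note l = LambdaD[OF assms(1,3)] and r = LambdaD[OF assms(2,3)]
  have "enn2real (output_xent \<mu> \<mu>) \<le> enn2real (output_xent \<mu> \<rho>)"
    using gibbs_inequality[OF l(1) r(1) assms(4)] kernel_xent_average(1)[OF l(2,3,4) r(1) assms(4)]
    by (intro enn2real_mono) auto
  then show ?thesis
    using info_eq_output_xent[OF assms(1,3,4)] dens_d_average(2)[OF l(2,3,4) r(1) assms(4)] by simp
qed

lemma f_lam_average:
  assumes "\<mu> \<in> Lambda \<gamma> q" "\<rho> \<in> Lambda \<gamma> q" "\<gamma> > 0" "q > 0"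
  shows "integrable \<mu> (\<lambda>x. f_lam \<gamma> lam x \<rho>)"
    "(\<integral>x. f_lam \<gamma> lam x \<rho> \<partial>\<mu>) = (\<integral>x. dens_d x \<rho> \<partial>\<mu>) - info \<rho> - lam * ((\<integral>x. x^2 \<partial>\<mu>) - \<gamma>)"
proof -
  note l = LambdaD[OF assms(1,3)] and r = LambdaD[OF assms(2,3)]
  interpret prob_space \<mu> by (rule l(2))
  have d_int: "integrable \<mu> (\<lambda>x. dens_d x \<rho>)" by (rule dens_d_average(1)[OF l(2,3,4) r(1) assms(4)])
  show "integrable \<mu> (\<lambda>x. f_lam \<gamma> lam x \<rho>)"
    unfolding f_lam_def using d_int l(5) by auto
  show "(\<integral>x. f_lam \<gamma> lam x \<rho> \<partial>\<mu>) = (\<integral>x. dens_d x \<rho> \<partial>\<mu>) - info \<rho> - lam * ((\<integral>x. x^2 \<partial>\<mu>) - \<gamma>)"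
    unfolding f_lam_def using d_int l(5) by (simp add: prob_space algebra_simps)
qed


section \<open>Sufficiency of the multiplier condition\<close>

text \<open>The proof compares f
  with the simple majorant a (1_{0} - q) - c 1_U, where a = f(0)/(1-q) and c = delta/(1-q).\<close>
lemma integral_bound_by_atom:
  fixes f :: "real \<Rightarrow> real"
  assumes "prob_space \<mu>" "sets \<mu> = sets borel" "integrable \<mu> f" "q < 1"
    and g: "\<And>x. q * f 0 + (1 - q) * f x \<le> 0"
    and U: "U \<in> sets borel" "0 \<notin> U" "\<And>x. x \<in> U \<Longrightarrow> q * f 0 + (1 - q) * f x \<le> - \<delta>"
  shows "(\<integral>x. f x \<partial>\<mu>) \<le> f 0 * (measure \<mu> {0} - q) / (1 - q) - \<delta> / (1 - q) * measure \<mu> U"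
proof -
  interpret prob_space \<mu> by fact
  define a where "a = f 0 / (1 - q)"
  define c where "c = \<delta> / (1 - q)"
  have ac: "(1 - q) * a = f 0" "(1 - q) * c = \<delta>"
    unfolding a_def c_def using assms(4) by simp_all
  define F where "F x = a * (indicator {0} x - q) - c * indicator U x" for x :: real
  have sets: "{0} \<in> sets \<mu>" "U \<in> sets \<mu>" using assms by auto
  have F_int: "integrable \<mu> (\<lambda>x. a * indicator {0} x)" "integrable \<mu> (\<lambda>x. c * indicator U x)"
    using sets by (auto intro!: integrable_mult_right integrable_real_indicator simp: less_top[symmetric])
  have "(\<integral>x. f x \<partial>\<mu>) \<le> (\<integral>x. F x \<partial>\<mu>)"
  proof (rule integral_mono[OF assms(3)])
    show "integrable \<mu> F" unfolding F_def using F_int by (simp add: right_diff_distrib)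
    have "(1 - q) * F x = - q * ((1 - q) * a) - ((1 - q) * c) * indicator U x" if "x \<noteq> 0" for x
      using that by (simp add: F_def algebra_simps)
    moreover have "(1 - q) * f x \<le> - q * f 0 - \<delta> * indicator U x" for x
      using g[of x] U(3)[of x] by (cases "x \<in> U") auto
    ultimately have "(1 - q) * f x \<le> (1 - q) * F x" if "x \<noteq> 0" for x
      using that unfolding ac by simp
    moreover have "F 0 = f 0" using U(2) ac(1) by (simp add: F_def algebra_simps)
    ultimately show "f x \<le> F x" for x
      using assms(4) by (cases "x = 0") auto
  qed
  also have "(\<integral>x. F x \<partial>\<mu>) = a * (measure \<mu> {0} - q) - c * measure \<mu> U"
    unfolding F_def using F_int sets by (simp add: prob_space right_diff_distrib)
  finally show ?thesis unfolding a_def c_def by simp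
qed

lemma f_lam_average_le:
  assumes "0 < q" "q < 1" "\<gamma> > 0" "\<mu>0 \<in> Lambda \<gamma> q" "\<mu> \<in> Lambda \<gamma> q"
    and g: "\<forall>x. g_lam \<gamma> q lam x \<mu>0 \<le> 0"
    and U: "U \<in> sets borel" "0 \<notin> U" "\<forall>x\<in>U. g_lam \<gamma> q lam x \<mu>0 \<le> - \<delta>"
  shows "(\<integral>x. f_lam \<gamma> lam x \<mu>0 \<partial>\<mu>) \<le> - \<delta> / (1 - q) * measure \<mu> U"
proof -
  note l = LambdaD[OF assms(5,3)]
  let ?f = "\<lambda>x. f_lam \<gamma> lam x \<mu>0"
  have "(\<integral>x. ?f x \<partial>\<mu>) \<le> ?f 0 * (measure \<mu> {0} - q) / (1 - q) - \<delta> / (1 - q) * measure \<mu> U"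
    using g U by (intro integral_bound_by_atom[OF l(2,3) f_lam_average(1)[OF assms(5,4,3,1)] assms(2)])
      (auto simp: g_lam_def)
  moreover have "?f 0 * (measure \<mu> {0} - q) / (1 - q) \<le> 0"
  proof -
    have "?f 0 \<le> 0" using g by (auto simp: g_lam_def algebra_simps dest: spec[of _ 0])
    moreover have "measure \<mu> {0} - q \<ge> 0" using l(1) unfolding anchored_def by auto
    ultimately show ?thesis using assms(2) by (simp add: divide_nonpos_pos mult_nonpos_nonneg)
  qed
  ultimately show ?thesis by linarith
qed

text \<open>Sufficiency: with g <= 0, the mean of f over mu is <= 0, i.e. the average of d(.;mu0)
  over mu is at most I(mu0) + lam (E X^2 - gamma) <= I(mu0), which bounds I(mu).\<close>
lemma sufficiency:
  assumes "\<gamma> > 0" "0 < q" "q < 1" "\<mu>0 \<in> Lambda \<gamma> q" "lam \<ge> 0" "\<forall>x. g_lam \<gamma> q lam x \<mu>0 \<le> 0"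
    "\<mu> \<in> Lambda \<gamma> q"
  shows "info \<mu> \<le> info \<mu>0"
proof -
  note l = LambdaD[OF assms(7,1)]
  have "(\<integral>x. f_lam \<gamma> lam x \<mu>0 \<partial>\<mu>) \<le> 0"
    using f_lam_average_le[OF assms(2,3,1,4,7,6), of "{}" 0] by simp
  then have "(\<integral>x. dens_d x \<mu>0 \<partial>\<mu>) \<le> info \<mu>0 + lam * ((\<integral>x. x^2 \<partial>\<mu>) - \<gamma>)"
    using f_lam_average(2)[OF assms(7,4,1,2)] by simp
  also have "\<dots> \<le> info \<mu>0" using l(6) assms(5) by (simp add: mult_nonneg_nonpos)
  finally show ?thesis using info_le_dens_d_average[OF assms(7,4,1,2)] by simp
qed


section \<open>Mixtures of input distributions\<close>

text \<open>The mixture (1-t) mu + t nu, realised as a Bernoulli choice between mu and nu.\<close>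
definition mix :: "real \<Rightarrow> real measure \<Rightarrow> real measure \<Rightarrow> real measure" where
  "mix t \<mu> \<nu> = bind (measure_pmf (bernoulli_pmf t)) (\<lambda>b. if b then \<nu> else \<mu>)"

locale mixture =
  fixes t :: real and \<mu> \<nu> :: "real measure"
  assumes t: "0 \<le> t" "t \<le> 1"
    and pm: "prob_space \<mu>" "sets \<mu> = sets borel"
    and pn: "prob_space \<nu>" "sets \<nu> = sets borel"
begin

lemma choice_kernel: "(\<lambda>b. if b then \<nu> else \<mu>) \<in> measure_pmf (bernoulli_pmf t) \<rightarrow>\<^sub>M prob_algebra borel"
  using pm pn by (auto simp: space_prob_algebra)

lemma bernoulli_prob: "measure_pmf (bernoulli_pmf t) \<in> space (prob_algebra (measure_pmf (bernoulli_pmf t)))"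
  by (auto simp: space_prob_algebra measure_pmf.prob_space_axioms)

lemma prob_space_mix: "prob_space (mix t \<mu> \<nu>)"
  unfolding mix_def by (rule prob_space_bind'[OF bernoulli_prob choice_kernel])

lemma sets_mix: "sets (mix t \<mu> \<nu>) = sets borel"
  unfolding mix_def by (rule sets_bind'[OF bernoulli_prob choice_kernel])

lemma nn_integral_mix:
  assumes "f \<in> borel_measurable borel"
  shows "(\<integral>\<^sup>+x. f x \<partial>mix t \<mu> \<nu>) = ennreal (1 - t) * (\<integral>\<^sup>+x. f x \<partial>\<mu>) + ennreal t * (\<integral>\<^sup>+x. f x \<partial>\<nu>)"
proof -
  have "(\<integral>\<^sup>+x. f x \<partial>mix t \<mu> \<nu>)
          = (\<integral>\<^sup>+b. \<integral>\<^sup>+x. f x \<partial>(if b then \<nu> else \<mu>) \<partial>measure_pmf (bernoulli_pmf t))"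
    unfolding mix_def by (rule nn_integral_bind[OF assms measurable_prob_algebraD[OF choice_kernel]])
  also have "\<dots> = (\<integral>\<^sup>+x. f x \<partial>\<nu>) * ennreal t + (\<integral>\<^sup>+x. f x \<partial>\<mu>) * ennreal (1 - t)"
    using t by (subst nn_integral_bernoulli_pmf) auto
  finally show ?thesis by (simp add: mult.commute add.commute)
qed

lemma measure_mix:
  assumes "A \<in> sets borel"
  shows "measure (mix t \<mu> \<nu>) A = (1 - t) * measure \<mu> A + t * measure \<nu> A"
proof -
  interpret m: prob_space \<mu> by (rule pm)
  interpret n: prob_space \<nu> by (rule pn)
  interpret x: prob_space "mix t \<mu> \<nu>" by (rule prob_space_mix)
  have "emeasure (mix t \<mu> \<nu>) A = ennreal (1 - t) * emeasure \<mu> A + ennreal t * emeasure \<nu> A"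
    using nn_integral_mix[of "indicator A"] assms pm pn sets_mix by (simp add: nn_integral_indicator)
  then have "ennreal (measure (mix t \<mu> \<nu>) A) = ennreal ((1 - t) * measure \<mu> A + t * measure \<nu> A)"
    using t assms pm pn sets_mix
    by (simp add: x.emeasure_eq_measure m.emeasure_eq_measure n.emeasure_eq_measure ennreal_mult ennreal_plus)
  then show ?thesis using t by (subst (asm) ennreal_inj) auto
qed

lemma pY_mix: "pY (mix t \<mu> \<nu>) y = (1 - t) * pY \<mu> y + t * pY \<nu> y"
proof -
  have nonneg: "pY \<rho> y \<ge> 0" for \<rho>
    by (simp add: pY_def integral_nonneg_AE phi_pos less_imp_le)
  have "ennreal (pY (mix t \<mu> \<nu>) y) = (\<integral>\<^sup>+x. phi (y - x) \<partial>mix t \<mu> \<nu>)"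
    by (rule pY_nn_integral[OF prob_space_mix sets_mix])
  also have "\<dots> = ennreal (1 - t) * ennreal (pY \<mu> y) + ennreal t * ennreal (pY \<nu> y)"
    by (subst nn_integral_mix) (auto simp: pY_nn_integral[OF pm] pY_nn_integral[OF pn])
  also have "\<dots> = ennreal ((1 - t) * pY \<mu> y + t * pY \<nu> y)"
    using t nonneg by (simp add: ennreal_mult ennreal_plus)
  finally show ?thesis
    using t nonneg by (subst (asm) ennreal_inj) auto
qed

end

lemma mix_in_Lambda:
  assumes "\<mu> \<in> Lambda \<gamma> q" "\<nu> \<in> Lambda \<gamma> q" "0 \<le> t" "t \<le> 1" "\<gamma> > 0"
  shows "mix t \<mu> \<nu> \<in> Lambda \<gamma> q"
proof -
  note l = LambdaD[OF assms(1,5)] and r = LambdaD[OF assms(2,5)]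
  interpret mixture t \<mu> \<nu> by (rule mixture.intro) (use assms l(2,3) r(2,3) in auto)
  show ?thesis
  proof (rule LambdaI[OF prob_space_mix sets_mix])
    have "measure \<mu> {0} \<ge> q" "measure \<nu> {0} \<ge> q" using l r unfolding anchored_def by auto
    then have "(1 - t) * q + t * q \<le> (1 - t) * measure \<mu> {0} + t * measure \<nu> {0}"
      using assms by (intro add_mono mult_left_mono) auto
    then show "measure (mix t \<mu> \<nu>) {0} \<ge> q" by (simp add: measure_mix algebra_simps)
    have a: "(\<integral>\<^sup>+x. ennreal (x^2) \<partial>\<mu>) \<le> ennreal \<gamma>" "(\<integral>\<^sup>+x. ennreal (x^2) \<partial>\<nu>) \<le> ennreal \<gamma>"
      using assms unfolding Lambda_def by auto
    have "(\<integral>\<^sup>+x. ennreal (x^2) \<partial>mix t \<mu> \<nu>)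
            = ennreal (1 - t) * (\<integral>\<^sup>+x. ennreal (x^2) \<partial>\<mu>) + ennreal t * (\<integral>\<^sup>+x. ennreal (x^2) \<partial>\<nu>)"
      by (rule nn_integral_mix) auto
    also have "\<dots> \<le> ennreal (1 - t) * ennreal \<gamma> + ennreal t * ennreal \<gamma>"
      using a by (intro add_mono mult_left_mono) auto
    also have "\<dots> = (ennreal (1 - t) + ennreal t) * ennreal \<gamma>" by (simp add: distrib_right)
    also have "ennreal (1 - t) + ennreal t = 1"
      using assms by (simp flip: ennreal_plus)
    finally show "(\<integral>\<^sup>+x. ennreal (x^2) \<partial>mix t \<mu> \<nu>) \<le> ennreal \<gamma>" by simp
  qed
qed

lemma output_xent_mix:
  assumes "\<mu> \<in> Lambda \<gamma> q" "\<nu> \<in> Lambda \<gamma> q" "0 \<le> t" "t \<le> 1" "\<gamma> > 0" "q > 0"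
  defines "M \<equiv> mix t \<mu> \<nu>"
  shows "output_xent M M = ennreal (1 - t) * output_xent \<mu> M + ennreal t * output_xent \<nu> M"
proof -
  note l = LambdaD[OF assms(1,5)] and r = LambdaD[OF assms(2,5)]
  interpret mixture t \<mu> \<nu> by (rule mixture.intro) (use assms l(2,3) r(2,3) in auto)
  note m = LambdaD[OF mix_in_Lambda[OF assms(1-5)] assms(5), folded M_def]
  note [measurable] = surprisal_measurable[OF m(2,3)] pY_measurable[OF l(2,3)] pY_measurable[OF r(2,3)]
  have nonneg: "pY \<mu> y \<ge> 0" "pY \<nu> y \<ge> 0" "surprisal M y \<ge> 0" for y
    using pY_pos[OF l(1) assms(6)] pY_pos[OF r(1) assms(6)] surprisal_nonneg[OF m(1) assms(6)]
    by (auto simp: less_imp_le)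
  have "ennreal (pY M y * surprisal M y)
          = ennreal (1 - t) * ennreal (pY \<mu> y * surprisal M y) + ennreal t * ennreal (pY \<nu> y * surprisal M y)"
    for y
  proof -
    have "pY M y * surprisal M y = (1 - t) * (pY \<mu> y * surprisal M y) + t * (pY \<nu> y * surprisal M y)"
      unfolding M_def pY_mix by (simp add: algebra_simps M_def)
    then show ?thesis
      using assms(3,4) nonneg[of y] by (simp add: ennreal_plus ennreal_mult)
  qed
  then show ?thesis
    unfolding output_xent_def by (simp add: nn_integral_add nn_integral_cmult)
qed


section \<open>Necessity: first-order condition at a maximiser\<close>

text \<open>For a maximiser mu0 and the mixture M = (1-t) mu0 + t mu, comparing I(M) <= I(mu0) with
  Gibbs' inequality J(mu0,mu0) <= J(mu0,M) yields J(mu,M) <= J(mu0,mu0).\<close>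
lemma maximiser_mixture_xent:
  assumes "\<gamma> > 0" "q > 0" "\<mu>0 \<in> Lambda \<gamma> q" "\<forall>\<mu>\<in>Lambda \<gamma> q. info \<mu> \<le> info \<mu>0" "\<mu> \<in> Lambda \<gamma> q"
    "0 < t" "t \<le> 1"
  shows "output_xent \<mu> (mix t \<mu>0 \<mu>) \<le> output_xent \<mu>0 \<mu>0"
proof -
  define M where "M = mix t \<mu>0 \<mu>"
  have M_adm: "M \<in> Lambda \<gamma> q" unfolding M_def using assms by (intro mix_in_Lambda) auto
  note l0 = LambdaD[OF assms(3,1)] and l = LambdaD[OF assms(5,1)] and lm = LambdaD[OF M_adm assms(1)]
  have fin: "output_xent \<mu>0 M < \<infinity>" "output_xent \<mu> M < \<infinity>" "output_xent \<mu>0 \<mu>0 < \<infinity>"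
    using kernel_xent_average(1)[OF l0(2,3,4) lm(1) assms(2)] kernel_xent_average(1)[OF l(2,3,4) lm(1) assms(2)]
      kernel_xent_average(1)[OF l0(2,3,4) l0(1) assms(2)] by auto
  define a where "a = enn2real (output_xent \<mu>0 M)"
  define b where "b = enn2real (output_xent \<mu> M)"
  define c where "c = enn2real (output_xent \<mu>0 \<mu>0)"
  have "enn2real (output_xent M M) = (1 - t) * a + t * b"
    using output_xent_mix[OF assms(3,5) _ _ assms(1,2), of t, folded M_def] fin assms(6,7)
    unfolding a_def b_def by (simp add: enn2real_plus enn2real_mult ennreal_mult_less_top)
  moreover have "info M \<le> info \<mu>0" using assms(4) M_adm by auto
  ultimately have mixed: "(1 - t) * a + t * b \<le> c"
    using info_eq_output_xent[OF M_adm assms(1,2)] info_eq_output_xent[OF assms(3,1,2)]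
    unfolding c_def by simp
  have "c \<le> a"
    unfolding a_def c_def using gibbs_inequality[OF l0(1) lm(1) assms(2)] fin by (intro enn2real_mono) auto
  then have "(1 - t) * c \<le> (1 - t) * a" using assms(7) by (intro mult_left_mono) auto
  with mixed have "t * b \<le> t * c" by (simp add: algebra_simps)
  then have "b \<le> c" using assms(6) by simp
  then have "ennreal b \<le> ennreal c" by (rule ennreal_leI)
  then show ?thesis
    using fin unfolding b_def c_def M_def infinity_ennreal_def by (simp only: ennreal_enn2real)
qed

text \<open>Letting t -> 0 (Fatou's lemma): every admissible mu satisfies
  int d(x;mu0) mu(dx) <= I(mu0).\<close>
lemma maximiser_dens_d_average:
  assumes "\<gamma> > 0" "q > 0" "\<mu>0 \<in> Lambda \<gamma> q" "\<forall>\<mu>\<in>Lambda \<gamma> q. info \<mu> \<le> info \<mu>0" "\<mu> \<in> Lambda \<gamma> q"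
  shows "(\<integral>x. dens_d x \<mu>0 \<partial>\<mu>) \<le> info \<mu>0"
proof -
  define t where "t n = inverse (real (Suc n))" for n
  have t: "0 < t n" "t n \<le> 1" for n unfolding t_def by (auto simp: field_simps)
  have t0: "t \<longlonglongrightarrow> 0" unfolding t_def by (rule LIMSEQ_inverse_real_of_nat)
  define M where "M n = mix (t n) \<mu>0 \<mu>" for n
  have M_adm: "M n \<in> Lambda \<gamma> q" for n unfolding M_def using assms t[of n] by (intro mix_in_Lambda) auto
  note l0 = LambdaD[OF assms(3,1)] and l = LambdaD[OF assms(5,1)]
  define u where "u n y = ennreal (pY \<mu> y * surprisal (M n) y)" for n y
  have u_meas: "u n \<in> borel_measurable borel" for n
  proof -
    note lm = LambdaD[OF M_adm[of n] assms(1)]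
    note [measurable] = surprisal_measurable[OF lm(2,3)] pY_measurable[OF l(2,3)]
    show ?thesis unfolding u_def by measurable
  qed
  have u_lim: "(\<lambda>n. u n y) \<longlonglongrightarrow> ennreal (pY \<mu> y * surprisal \<mu>0 y)" for y
  proof -
    interpret mixture "t n" \<mu>0 \<mu> for n
      by (rule mixture.intro) (use t l0(2,3) l(2,3) in \<open>auto simp: less_imp_le\<close>)
    have "(\<lambda>n. (1 - t n) * pY \<mu>0 y + t n * pY \<mu> y) \<longlonglongrightarrow> (1 - 0) * pY \<mu>0 y + 0 * pY \<mu> y"
      by (intro tendsto_intros t0)
    then have "(\<lambda>n. pY (M n) y) \<longlonglongrightarrow> pY \<mu>0 y" unfolding M_def pY_mix by simp
    then have "(\<lambda>n. pY \<mu> y * surprisal (M n) y) \<longlonglongrightarrow> pY \<mu> y * surprisal \<mu>0 y"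
      unfolding surprisal_def using pY_pos[OF l0(1) assms(2), of y] by (intro tendsto_intros) auto
    then show ?thesis unfolding u_def by (rule tendsto_ennrealI)
  qed
  have "output_xent \<mu> \<mu>0 = (\<integral>\<^sup>+y. liminf (\<lambda>n. u n y) \<partial>lborel)"
    unfolding output_xent_def by (intro nn_integral_cong) (metis u_lim lim_imp_Liminf trivial_limit_sequentially)
  also have "\<dots> \<le> liminf (\<lambda>n. integral\<^sup>N lborel (u n))"
    by (rule nn_integral_liminf) (use u_meas in simp)
  also have "\<dots> \<le> output_xent \<mu>0 \<mu>0"
    using maximiser_mixture_xent[OF assms t] unfolding u_def M_def output_xent_def
    by (intro Liminf_le) simp_all
  finally have "enn2real (output_xent \<mu> \<mu>0) \<le> enn2real (output_xent \<mu>0 \<mu>0)"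
    using kernel_xent_average(1)[OF l0(2,3,4) l0(1) assms(2)] by (intro enn2real_mono) auto
  then show ?thesis
    using dens_d_average(2)[OF l(2,3,4) l0(1) assms(2)] info_eq_output_xent[OF assms(3,1,2)] by simp
qed


text \<open>The input law with mass q at 0, (1-q) a at u and (1-q)(1-a) at v.\<close>
definition three_point :: "real \<Rightarrow> real \<Rightarrow> real \<Rightarrow> real \<Rightarrow> real measure" where
  "three_point q a u v = mix (1 - q) (return borel 0) (mix (1 - a) (return borel u) (return borel v))"

lemma three_point_props:
  assumes "0 \<le> q" "q \<le> 1" "0 \<le> a" "a \<le> 1"
  shows "prob_space (three_point q a u v)" "sets (three_point q a u v) = sets borel"
    "measure (three_point q a u v) {0} \<ge> q"
    "\<And>f. f \<in> borel_measurable borel \<Longrightarrow> (\<integral>\<^sup>+x. f x \<partial>three_point q a u v)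
           = ennreal q * f 0 + ennreal (1 - q) * (ennreal a * f u + ennreal (1 - a) * f v)"
proof -
  have dirac: "prob_space (return borel x)" "sets (return borel x) = sets borel" for x :: real
    by (auto intro: prob_space_return)
  interpret inner: mixture "1 - a" "return borel u" "return borel v"
    by (rule mixture.intro) (use assms dirac in auto)
  interpret outer: mixture "1 - q" "return borel 0" "mix (1 - a) (return borel u) (return borel v)"
    by (rule mixture.intro) (use assms dirac inner.prob_space_mix inner.sets_mix in auto)
  show "prob_space (three_point q a u v)" "sets (three_point q a u v) = sets borel"
    unfolding three_point_def by (rule outer.prob_space_mix, rule outer.sets_mix)
  show "(\<integral>\<^sup>+x. f x \<partial>three_point q a u v)
          = ennreal q * f 0 + ennreal (1 - q) * (ennreal a * f u + ennreal (1 - a) * f v)"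
    if "f \<in> borel_measurable borel" for f
    unfolding three_point_def using that by (simp add: outer.nn_integral_mix inner.nn_integral_mix nn_integral_return)
  have "measure (three_point q a u v) {0}
          = q * measure (return borel (0::real)) {0} + (1 - q) * measure (mix (1 - a) (return borel u) (return borel v)) {0}"
    unfolding three_point_def by (subst outer.measure_mix) auto
  moreover have "measure (return borel (0::real)) {0} = 1" by (simp add: measure_def)
  ultimately show "measure (three_point q a u v) {0} \<ge> q"
    using assms by (simp add: measure_nonneg)
qed

lemma maximiser_three_point:
  assumes "\<gamma> > 0" "0 < q" "q < 1" "\<mu>0 \<in> Lambda \<gamma> q" "\<forall>\<mu>\<in>Lambda \<gamma> q. info \<mu> \<le> info \<mu>0"
    "0 \<le> a" "a \<le> 1" "(1 - q) * (a * u^2 + (1 - a) * v^2) \<le> \<gamma>"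
  shows "q * dens_d 0 \<mu>0 + (1 - q) * (a * dens_d u \<mu>0 + (1 - a) * dens_d v \<mu>0) \<le> info \<mu>0"
proof -
  let ?P = "three_point q a u v"
  have q01: "0 \<le> q" "q \<le> 1" using assms(2,3) by auto
  note P = three_point_props[OF q01 assms(6,7), where u=u and v=v]
  note l0 = LambdaD[OF assms(4,1)]
  let ?D = "kernel_xent \<mu>0"
  let ?avg = "\<lambda>h. q * h 0 + (1 - q) * (a * h u + (1 - a) * h v)"
  have nn_avg: "ennreal q * ennreal (h 0) + ennreal (1 - q) * (ennreal a * ennreal (h u) + ennreal (1 - a) * ennreal (h v))
                  = ennreal (?avg h)" if "\<And>x. h x \<ge> 0" for h
    using assms that by (simp add: ennreal_mult[symmetric] ennreal_plus[symmetric] del: ennreal_plus)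
  have "(\<integral>\<^sup>+x. ennreal (x^2) \<partial>?P) = ennreal (?avg (\<lambda>x. x^2))"
    using assms P(4)[of "\<lambda>x. ennreal (x^2)"] nn_avg[of "\<lambda>x. x^2"] by simp
  then have P_adm: "?P \<in> Lambda \<gamma> q"
    using P assms by (intro LambdaI) (auto intro: ennreal_leI)
  have "output_xent ?P \<mu>0 = ennreal (?avg ?D)"
    using nn_integral_kernel_xent[OF P(1,2) l0(1) assms(2), symmetric] P(4)[of "\<lambda>x. ennreal (?D x)"]
      kernel_xent_measurable[OF l0(1) assms(2)] nn_avg[of ?D] kernel_xent_nonneg[OF l0(1) assms(2)]
    using assms by auto
  moreover have "?avg ?D \<ge> 0"
    using assms kernel_xent_nonneg[OF l0(1) assms(2)] by (intro add_nonneg_nonneg mult_nonneg_nonneg) auto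
  ultimately have "(\<integral>x. dens_d x \<mu>0 \<partial>?P) = gauss_log_const + ?avg ?D"
    using dens_d_average(2)[OF LambdaD(2,3,4)[OF P_adm assms(1)] l0(1) assms(2)] by simp
  moreover have "(\<integral>x. dens_d x \<mu>0 \<partial>?P) \<le> info \<mu>0"
    by (rule maximiser_dens_d_average[OF assms(1,2,4,5) P_adm])
  ultimately show ?thesis using dens_d_split[OF l0(1) assms(2)] by (simp add: algebra_simps)
qed


lemma two_point_ratio_bound:
  fixes h s :: "'a \<Rightarrow> real"
  assumes avg: "\<And>a x1 x2. 0 \<le> a \<Longrightarrow> a \<le> 1 \<Longrightarrow> a * s x1 + (1 - a) * s x2 \<le> 0 \<Longrightarrow>
                a * h x1 + (1 - a) * h x2 \<le> 0"
    and s1: "s x1 < 0" and s2: "s x2 > 0"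
  shows "h x2 / s x2 \<le> h x1 / s x1"
proof -
  define a where "a = s x2 / (s x2 - s x1)"
  have den: "s x2 - s x1 > 0" using s1 s2 by simp
  have a: "0 \<le> a" "a \<le> 1" "1 - a = - s x1 / (s x2 - s x1)"
    unfolding a_def using s1 s2 den by (auto simp: field_simps)
  have "a * s x1 + (1 - a) * s x2 = 0"
    unfolding a(3) unfolding a_def using den by (simp add: field_simps)
  then have "a * h x1 + (1 - a) * h x2 \<le> 0" using avg a(1,2) by simp
  moreover have "a * h x1 + (1 - a) * h x2 = (s x2 * h x1 - s x1 * h x2) / (s x2 - s x1)"
    unfolding a(3) unfolding a_def by (simp add: add_divide_distrib diff_divide_distrib)
  ultimately have "s x2 * h x1 - s x1 * h x2 \<le> 0"
    using den by (simp add: divide_le_0_iff)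
  then show ?thesis using s1 s2 by (simp add: field_simps mult.commute)
qed

text \<open>A one-constraint Lagrange multiplier rule: under the same hypothesis, and if the
  constraint is strictly satisfiable, h <= lam s for some lam >= 0.  By the previous lemma the
  ratios h/s at points with s > 0 are bounded, and lam is taken as their supremum.\<close>
lemma lagrange_multiplier:
  fixes h s :: "'a \<Rightarrow> real"
  assumes slater: "s x0 < 0"
    and avg: "\<And>a x1 x2. 0 \<le> a \<Longrightarrow> a \<le> 1 \<Longrightarrow> a * s x1 + (1 - a) * s x2 \<le> 0 \<Longrightarrow>
                a * h x1 + (1 - a) * h x2 \<le> 0"
  shows "\<exists>lam\<ge>0. \<forall>x. h x \<le> lam * s x"
proof -
  have nonpos: "h x \<le> 0" if "s x \<le> 0" for x using avg[of 1 x x] that by simp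
  have ratio: "h x2 / s x2 \<le> h x1 / s x1" if "s x1 < 0" "s x2 > 0" for x1 x2
    using two_point_ratio_bound[of s h x1 x2] avg that by blast
  define R where "R = insert 0 {h x / s x | x. s x > 0}"
  define lam where "lam = Sup R"
  have bdd: "bdd_above R"
    unfolding R_def bdd_above_def using ratio[OF slater] nonpos[of x0] slater
    by (intro exI[of _ "h x0 / s x0"]) (auto simp: divide_nonpos_neg)
  have "h x \<le> lam * s x" for x
  proof (cases "s x" "0::real" rule: linorder_cases)
    case less
    have "lam \<le> h x / s x"
      unfolding lam_def R_def using ratio[OF less] nonpos[of x] less
      by (intro cSup_least) (auto simp: divide_nonpos_neg)
    then show ?thesis using less by (simp add: le_divide_eq)
  next
    case equal
    then show ?thesis using nonpos[of x] by simp
  next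
    case greater
    have "h x / s x \<le> lam" unfolding lam_def using bdd greater by (intro cSup_upper) (auto simp: R_def)
    then show ?thesis using greater by (simp add: divide_le_eq)
  qed
  moreover have "lam \<ge> 0" unfolding lam_def using bdd by (intro cSup_upper) (auto simp: R_def)
  ultimately show ?thesis by blast
qed

lemma g_lam_expand:
  "g_lam \<gamma> q lam x \<mu>0 = q * dens_d 0 \<mu>0 + (1 - q) * dens_d x \<mu>0 - info \<mu>0 - lam * ((1 - q) * x^2 - \<gamma>)"
  by (simp add: g_lam_def f_lam_def algebra_simps)

text \<open>Necessity: a maximiser admits a multiplier lam >= 0 with g <= 0, obtained from the
  three-point condition with constraint function s x = (1-q) x^2 - gamma (s 0 < 0).\<close>
lemma maximiser_multiplier:
  assumes "\<gamma> > 0" "0 < q" "q < 1" "\<mu>0 \<in> Lambda \<gamma> q" "\<forall>\<mu>\<in>Lambda \<gamma> q. info \<mu> \<le> info \<mu>0"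
  shows "\<exists>lam\<ge>0. \<forall>x. g_lam \<gamma> q lam x \<mu>0 \<le> 0"
proof -
  define h where "h x = q * dens_d 0 \<mu>0 + (1 - q) * dens_d x \<mu>0 - info \<mu>0" for x
  define s where "s x = (1 - q) * x^2 - \<gamma>" for x
  have "\<exists>lam\<ge>0. \<forall>x. h x \<le> lam * s x"
  proof (rule lagrange_multiplier[of s 0])
    show "s 0 < 0" using assms(1) by (simp add: s_def)
    fix a x1 x2 :: real
    assume a: "0 \<le> a" "a \<le> 1" and "a * s x1 + (1 - a) * s x2 \<le> 0"
    then have "(1 - q) * (a * x1^2 + (1 - a) * x2^2) \<le> \<gamma>" by (simp add: s_def algebra_simps)
    from maximiser_three_point[OF assms a this]
    show "a * h x1 + (1 - a) * h x2 \<le> 0" by (simp add: h_def algebra_simps)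
  qed
  then show ?thesis by (simp add: g_lam_expand h_def s_def)
qed


section \<open>The multiplier condition is tight on the support\<close>

lemma g_lam_continuous:
  assumes "\<mu>0 \<in> Lambda \<gamma> q" "\<gamma> > 0" "q > 0"
  shows "isCont (\<lambda>x. g_lam \<gamma> q lam x \<mu>0) x"
proof -
  have "(\<lambda>x. g_lam \<gamma> q lam x \<mu>0) = (\<lambda>x. q * dens_d 0 \<mu>0 + (1 - q) * (gauss_log_const + kernel_xent \<mu>0 x)
                                         - info \<mu>0 - lam * ((1 - q) * x^2 - \<gamma>))"
    unfolding g_lam_expand using dens_d_split[OF LambdaD(1)[OF assms(1,2)] assms(3)] by auto
  then show ?thesis
    using kernel_xent_continuous[OF LambdaD(1)[OF assms(1,2)] assms(3)] by (simp add: continuous_intros)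
qed

text \<open>If g < 0 at a point of increase x1 /= 0, then g <= -delta on a neighbourhood U of x1
  avoiding 0, which has positive mass; so int f(x;mu0) mu0(dx) < 0.  But this integral equals
  -lam (E X^2 - gamma) >= 0.\<close>
lemma g_lam_zero_on_support:
  assumes "\<gamma> > 0" "0 < q" "q < 1" "\<mu>0 \<in> Lambda \<gamma> q" "lam \<ge> 0" "\<forall>x. g_lam \<gamma> q lam x \<mu>0 \<le> 0"
    and x1: "x1 \<in> points_of_increase \<mu>0" "x1 \<noteq> 0"
  shows "g_lam \<gamma> q lam x1 \<mu>0 = 0"
proof (rule ccontr)
  define G where "G x = g_lam \<gamma> q lam x \<mu>0" for x
  assume "g_lam \<gamma> q lam x1 \<mu>0 \<noteq> 0"
  then have "G x1 < 0" using assms(6) unfolding G_def by (meson less_le)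
  define \<delta> where "\<delta> = - G x1 / 2"
  have \<delta>: "\<delta> > 0" unfolding \<delta>_def using \<open>G x1 < 0\<close> by simp
  obtain r where r: "r > 0" "\<And>x. dist x x1 < r \<Longrightarrow> dist (G x) (G x1) < \<delta>"
    using g_lam_continuous[OF assms(4,1,2)] \<delta> unfolding G_def continuous_at_eps_delta by blast
  define U where "U = ball x1 (min r \<bar>x1\<bar>)"
  have U: "open U" "x1 \<in> U" "0 \<notin> U" unfolding U_def using r x1(2) by (auto simp: dist_real_def)
  have "G x \<le> - \<delta>" if "x \<in> U" for x
  proof -
    have "dist x x1 < r" using that unfolding U_def by (auto simp: dist_commute)
    then show ?thesis using r(2) unfolding \<delta>_def dist_real_def by fastforce
  qed
  then have "(\<integral>x. f_lam \<gamma> lam x \<mu>0 \<partial>\<mu>0) \<le> - \<delta> / (1 - q) * measure \<mu>0 U"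
    using U by (intro f_lam_average_le[OF assms(2,3,1,4,4,6)]) (auto simp: G_def)
  also have "\<dots> < 0"
  proof -
    interpret prob_space \<mu>0 using LambdaD(2)[OF assms(4,1)] .
    have "measure \<mu>0 U > 0"
      using x1(1) U unfolding points_of_increase_def by (auto simp: emeasure_eq_measure)
    then show ?thesis using \<delta> assms(3) by (simp add: mult_pos_pos)
  qed
  finally have "(\<integral>x. f_lam \<gamma> lam x \<mu>0 \<partial>\<mu>0) < 0" .
  moreover have "(\<integral>x. f_lam \<gamma> lam x \<mu>0 \<partial>\<mu>0) = - lam * ((\<integral>x. x^2 \<partial>\<mu>0) - \<gamma>)"
    using f_lam_average(2)[OF assms(4,4,1,2)] unfolding info_def by simp
  moreover have "- lam * ((\<integral>x. x^2 \<partial>\<mu>0) - \<gamma>) \<ge> 0"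
    using LambdaD(6)[OF assms(4,1)] assms(5) by (simp add: mult_nonneg_nonpos)
  ultimately show False by simp
qed


theorem lemma6:
  fixes \<gamma> q :: real and \<mu>0 :: "real measure"
  assumes "\<gamma> > 0" and "0 < q" and "q < 1"
    and "\<mu>0 \<in> Lambda \<gamma> q"
  shows "((\<forall>\<mu>\<in>Lambda \<gamma> q. info \<mu> \<le> info \<mu>0) \<longleftrightarrow>
           (\<exists>lam\<ge>0. \<forall>x. g_lam \<gamma> q lam x \<mu>0 \<le> 0)) \<and>
         (\<forall>lam. (\<forall>\<mu>\<in>Lambda \<gamma> q. info \<mu> \<le> info \<mu>0) \<and> lam \<ge> 0 \<and>
           (\<forall>x. g_lam \<gamma> q lam x \<mu>0 \<le> 0) \<longrightarrow>
           (\<forall>x \<in> points_of_increase \<mu>0 - {0}. g_lam \<gamma> q lam x \<mu>0 = 0))"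
proof (intro conjI iffI allI impI ballI)
  show "\<exists>lam\<ge>0. \<forall>x. g_lam \<gamma> q lam x \<mu>0 \<le> 0" if "\<forall>\<mu>\<in>Lambda \<gamma> q. info \<mu> \<le> info \<mu>0"
    using maximiser_multiplier[OF assms that] .
  show "info \<mu> \<le> info \<mu>0" if "\<exists>lam\<ge>0. \<forall>x. g_lam \<gamma> q lam x \<mu>0 \<le> 0" "\<mu> \<in> Lambda \<gamma> q" for \<mu>
    using that sufficiency[OF assms] by blast
  show "g_lam \<gamma> q lam x \<mu>0 = 0"
    if "(\<forall>\<mu>\<in>Lambda \<gamma> q. info \<mu> \<le> info \<mu>0) \<and> 0 \<le> lam \<and> (\<forall>x. g_lam \<gamma> q lam x \<mu>0 \<le> 0)"
      and "x \<in> points_of_increase \<mu>0 - {0}" for lam x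
    using that g_lam_zero_on_support[OF assms, of lam x] by auto
qed

end
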